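(* Let $M=\{M_\gamma\}_{\gamma\in\Gamma}$ be a defining family of functions on $\mathbb R^k$. Then for every $p\ge 1$ the space $\mathcal D(\mathbb R^k)$ of smooth compactly supported functions on $\mathbb R^k$ is dense in $\mathcal K_p(M)$.
   Context: A defining family of functions on $\mathbb R^k$ is a family $M=\{M_\gamma\}_{\gamma\in\Gamma}$ of nonnegative measurable functions on $\mathbb R^k$, each bounded on bounded subsets of $\mathbb R^k$, such that: (a) for all $\gamma_1,\gamma_2\in\Gamma$ there are $\gamma\in\Gamma$ and $C>0$ with $M_\gamma\ge C(M_{\gamma_1}+M_{\gamma_2})$; (b) there is a countable $\Gamma'\subset\Gamma$ such that for every $\gamma\in\Gamma$ there are $\gamma'\in\Gamma'$ and $C>0$ with $CM_\gamma\le M_{\gamma'}$; (c) for every $x\in\mathbb R^k$ there are $\gamma\in\Gamma$, a neighborhood $O(x)$ of $x$ and $C>0$ with $M_\gamma(x')\ge C$ for all $x'\in O(x)$. For $p\ge1$, $\mathcal K_p(M)$ is the space of all smooth functions $f$ on $\mathbb R^k$ for which the seminorms $\|f\|^p_{\gamma,m}=\left(\int_{\mathbb R^k}[M_\gamma(x)]^p\sum_{|\mu|\le m}|\partial^\mu f(x)|^p\,dx\right)^{1/p}$ are finite for all $\gamma\in\Gamma$, $m\in\mathbb Z_+$, with the topology given by these seminorms (multi-index notation: $\mu\in\mathbb Z_+^k$, $|\mu|=\mu_1+\dots+\mu_k$). *)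

theory Defs
  imports "HOL-Analysis.Analysis"
begin

text \<open>Points of R^k are vectors of type real^'n with CARD('n) = k.
  Partial derivative in the i-th coordinate direction.\<close>
definition pdiff :: "'n::finite \<Rightarrow> (real^'n \<Rightarrow> real) \<Rightarrow> (real^'n \<Rightarrow> real)" where
  "pdiff i f = (\<lambda>x. deriv (\<lambda>t. f (x + t *\<^sub>R axis i 1)) 0)"

fun pdiffs :: "'n::finite list \<Rightarrow> (real^'n \<Rightarrow> real) \<Rightarrow> (real^'n \<Rightarrow> real)" where
  "pdiffs [] f = f"
| "pdiffs (i # is) f = pdiff i (pdiffs is f)"

definition smooth_fun :: "(real^'n::finite \<Rightarrow> real) \<Rightarrow> bool" where
  "smooth_fun f \<longleftrightarrow>
     (\<forall>ds. continuous_on UNIV (pdiffs ds f) \<and>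
       (\<forall>i x. (\<lambda>t. pdiffs ds f (x + t *\<^sub>R axis i 1)) differentiable (at 0)))"

text \<open>Multi-index derivative: apply the i-th partial derivative mu i times for each
  coordinate i (in a fixed enumeration of the coordinates; for smooth functions
  the order is irrelevant).\<close>
definition coord_enum :: "'n::finite list" where
  "coord_enum = (SOME xs. distinct xs \<and> set xs = UNIV)"

definition mderiv :: "('n::finite \<Rightarrow> nat) \<Rightarrow> (real^'n \<Rightarrow> real) \<Rightarrow> (real^'n \<Rightarrow> real)" where
  "mderiv \<mu> f = foldr (\<lambda>i g. (pdiff i ^^ \<mu> i) g) coord_enum f"

definition mi_order :: "('n::finite \<Rightarrow> nat) \<Rightarrow> nat" where
  "mi_order \<mu> = (\<Sum>i\<in>UNIV. \<mu> i)"

definition seminorm_pow :: "real \<Rightarrow> (real^'n::finite \<Rightarrow> real) \<Rightarrow> nat \<Rightarrow> (real^'n \<Rightarrow> real) \<Rightarrow> ennreal" where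
  "seminorm_pow p W m f =
     (\<integral>\<^sup>+ x. ennreal ((W x) powr p * (\<Sum>\<mu>\<in>{\<mu>. mi_order \<mu> \<le> m}. \<bar>mderiv \<mu> f x\<bar> powr p)) \<partial>lborel)"

definition Kseminorm :: "real \<Rightarrow> (real^'n::finite \<Rightarrow> real) \<Rightarrow> nat \<Rightarrow> (real^'n \<Rightarrow> real) \<Rightarrow> real" where
  "Kseminorm p W m f = (enn2real (seminorm_pow p W m f)) powr (1 / p)"

definition defining_family :: "('g \<Rightarrow> real^'n::finite \<Rightarrow> real) \<Rightarrow> bool" where
  "defining_family M \<longleftrightarrow>
     (\<forall>\<gamma>. M \<gamma> \<in> borel_measurable lborel) \<and>
     (\<forall>\<gamma> x. 0 \<le> M \<gamma> x) \<and>
     (\<forall>\<gamma> S. bounded S \<longrightarrow> (\<exists>B. \<forall>x\<in>S. M \<gamma> x \<le> B)) \<and>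
     (\<forall>\<gamma>1 \<gamma>2. \<exists>\<gamma>. \<exists>C>0. \<forall>x. M \<gamma> x \<ge> C * (M \<gamma>1 x + M \<gamma>2 x)) \<and>
     (\<exists>\<Gamma>'. countable \<Gamma>' \<and> (\<forall>\<gamma>. \<exists>\<gamma>'\<in>\<Gamma>'. \<exists>C>0. \<forall>x. C * M \<gamma> x \<le> M \<gamma>' x)) \<and>
     (\<forall>x. \<exists>\<gamma> U C. open U \<and> x \<in> U \<and> C > 0 \<and> (\<forall>x'\<in>U. M \<gamma> x' \<ge> C))"

definition Kp :: "real \<Rightarrow> ('g \<Rightarrow> real^'n::finite \<Rightarrow> real) \<Rightarrow> (real^'n \<Rightarrow> real) set" where
  "Kp p M = {f. smooth_fun f \<and> (\<forall>\<gamma> m. seminorm_pow p (M \<gamma>) m f < \<infinity>)}"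

definition test_functions :: "(real^'n::finite \<Rightarrow> real) set" where
  "test_functions = {g. smooth_fun g \<and> compact (closure {x. g x \<noteq> 0})}"

end

theory Submission
  imports Defs "HOL-Computational_Algebra.Polynomial" "HOL-Library.Sublist"
begin

(* Approximate f by cutoff n * f, where cutoff n x = bump_cube (x / (n + 1)) and bump_cube, a
   product of one-dimensional bumps built from exp (-1/t), is a test function equal to 1 at 0.
   By the Leibniz rule every derivative of order at most m of (1 - cutoff n) * f is bounded,
   uniformly in n, by a constant times the sum of the |d^nu f| with |nu| <= m, and it tends to 0
   pointwise, since the derivatives of cutoff n carry a factor (n + 1)^(-|a|) and cutoff n tends
   to 1.  Dominated convergence then gives convergence in every seminorm.  The approximation
   only uses that the weights M gamma are measurable and that p > 0; their local boundedness is
   what puts the test functions into K_p(M). *)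

section \<open>The flat function exp (-1/t)\<close>

definition smooth_real :: "(real \<Rightarrow> real) \<Rightarrow> bool" where
  "smooth_real u \<longleftrightarrow> (\<forall>k x. ((deriv ^^ k) u has_real_derivative (deriv ^^ Suc k) u x) (at x))"

(* The derivatives of flat_exp are all of this shape. *)
definition flat_exp_poly :: "real poly \<Rightarrow> real \<Rightarrow> real" where
  "flat_exp_poly P t = (if t > 0 then poly P (1/t) * exp (- (1/t)) else 0)"

definition flat_exp :: "real \<Rightarrow> real" where
  "flat_exp = flat_exp_poly 1"

lemma flat_exp_eq: "flat_exp t = (if t > 0 then exp (- (1/t)) else 0)"
  by (simp add: flat_exp_def flat_exp_poly_def)

lemma tendsto_poly_inverse_mult_exp:
  "((\<lambda>h. poly Q (1/h) * exp (- (1/h))) \<longlongrightarrow> 0) (at_right (0::real))"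
proof -
  have "poly Q s * exp (- s) = (\<Sum>i\<le>degree Q. coeff Q i * (s ^ i / exp s))" for s
    by (simp add: poly_altdef exp_minus field_simps sum_divide_distrib)
  moreover have "((\<lambda>s. \<Sum>i\<le>degree Q. coeff Q i * (s ^ i / exp s)) \<longlongrightarrow> 0) at_top"
    by (intro tendsto_null_sum tendsto_mult_right_zero tendsto_power_div_exp_0)
  ultimately have "((\<lambda>s. poly Q s * exp (- s)) \<longlongrightarrow> 0) at_top"
    by simp
  from filterlim_compose[OF this filterlim_inverse_at_top_right] show ?thesis
    by (simp add: inverse_eq_divide)
qed

lemma flat_exp_poly_has_real_derivative:
  "(flat_exp_poly P has_real_derivative flat_exp_poly ([:0,0,1:] * (P - pderiv P)) t) (at t)"
proof (cases t "0::real" rule: linorder_cases)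
  case less
  have "((\<lambda>_. 0) has_real_derivative 0) (at t)"
    by simp
  then have "(flat_exp_poly P has_real_derivative 0) (at t)"
    by (rule has_field_derivative_transform_within_open[where S="{..<0}"])
      (use less in \<open>auto simp: flat_exp_poly_def\<close>)
  then show ?thesis
    using less by (simp add: flat_exp_poly_def)
next
  case equal
  have "\<forall>\<^sub>F h in at_right 0. poly (pCons 0 P) (1/h) * exp (- (1/h)) =
      (flat_exp_poly P h - flat_exp_poly P 0) / (h - 0)"
    by (auto simp: flat_exp_poly_def intro!: eventually_mono[OF eventually_at_right_real[of 0 1]])
  from Lim_transform_eventually[OF tendsto_poly_inverse_mult_exp this]
  have "((\<lambda>h. (flat_exp_poly P h - flat_exp_poly P 0) / (h - 0)) \<longlongrightarrow> 0) (at_right 0)" .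
  moreover have "((\<lambda>h. (flat_exp_poly P h - flat_exp_poly P 0) / (h - 0)) \<longlongrightarrow> 0) (at_left 0)"
    by (rule tendsto_eventually, rule eventually_mono[OF eventually_at_left_real[of "-1" "0::real"]])
      (auto simp: flat_exp_poly_def)
  ultimately show ?thesis
    using equal by (simp add: has_field_derivative_iff filterlim_at_split flat_exp_poly_def)
next
  case greater
  have "((\<lambda>t. poly P (1/t) * exp (- (1/t))) has_real_derivative
      poly (pderiv P) (1/t) * (- 1 / t^2) * exp (- (1/t)) + poly P (1/t) * (exp (- (1/t)) * (1/t^2))) (at t)"
    using greater
    by (auto intro!: derivative_eq_intros DERIV_chain2[OF poly_DERIV] simp: power2_eq_square)
  moreover have "poly (pderiv P) (1/t) * (- 1 / t^2) * exp (- (1/t)) + poly P (1/t) * (exp (- (1/t)) * (1/t^2))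
      = flat_exp_poly ([:0,0,1:] * (P - pderiv P)) t"
    using greater by (simp add: flat_exp_poly_def algebra_simps power2_eq_square)
  ultimately show ?thesis
    by (rule_tac has_field_derivative_transform_within_open[where S="{0<..}"])
      (use greater in \<open>auto simp: flat_exp_poly_def\<close>)
qed

lemma smooth_real_flat_exp: "smooth_real flat_exp"
proof -
  have deriv_flat_exp_poly: "deriv (flat_exp_poly P) = flat_exp_poly ([:0,0,1:] * (P - pderiv P))" for P
    using flat_exp_poly_has_real_derivative by (auto intro!: DERIV_imp_deriv)
  have "\<exists>P. (deriv ^^ k) flat_exp = flat_exp_poly P" for k
    by (induction k) (auto simp: flat_exp_def deriv_flat_exp_poly)
  then show ?thesis
    unfolding smooth_real_def
    by (metis deriv_flat_exp_poly flat_exp_poly_has_real_derivative funpow.simps(2) o_apply)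
qed

section \<open>Iterated partial derivatives\<close>

abbreviation on_line :: "(real^'n::finite \<Rightarrow> real) \<Rightarrow> real^'n \<Rightarrow> 'n \<Rightarrow> real \<Rightarrow> real" where
  "on_line g x i \<equiv> \<lambda>t. g (x + t *\<^sub>R axis i 1)"

lemma pdiff_eqI: "(on_line g x i has_real_derivative D) (at 0) \<Longrightarrow> pdiff i g x = D"
  by (simp add: pdiff_def DERIV_imp_deriv)

lemma smooth_fun_continuous_on: "smooth_fun f \<Longrightarrow> continuous_on UNIV (pdiffs ds f)"
  by (simp add: smooth_fun_def)

lemma smooth_fun_has_real_derivative_on_line:
  "smooth_fun f \<Longrightarrow> (on_line (pdiffs ds f) x i has_real_derivative pdiff i (pdiffs ds f) x) (at 0)"
  by (simp add: smooth_fun_def pdiff_def DERIV_deriv_iff_real_differentiable)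

lemma borel_measurable_pdiffs: "smooth_fun f \<Longrightarrow> pdiffs ds f \<in> borel_measurable lborel"
  by (simp add: smooth_fun_def borel_measurable_continuous_onI)

lemma smooth_funI:
  assumes "\<And>ds. continuous_on UNIV (pdiffs ds f)"
    and "\<And>ds i x. (on_line (pdiffs ds f) x i has_real_derivative pdiffs (i # ds) f x) (at 0)"
  shows "smooth_fun f"
  using assms real_differentiable_def unfolding smooth_fun_def by blast

lemma pdiffs_append: "pdiffs (xs @ ys) f = pdiffs xs (pdiffs ys f)"
  by (induction xs) auto

lemma pdiffs_eqI:
  assumes "F [] = f"
    and "\<And>ds i x. (on_line (F ds) x i has_real_derivative F (i # ds) x) (at 0)"
  shows "pdiffs ds f = F ds"
proof (induction ds)
  case (Cons i ds)
  show ?case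
    using assms(2)[of ds, THEN pdiff_eqI] by (simp add: Cons fun_eq_iff)
qed (simp add: assms(1))

lemma smooth_funI_pdiffs_eq:
  assumes "F [] = f" and "\<And>ds. continuous_on UNIV (F ds)"
    and "\<And>ds i x. (on_line (F ds) x i has_real_derivative F (i # ds) x) (at 0)"
  shows "smooth_fun f"
  using assms pdiffs_eqI[of F f, OF assms(1,3)] by (intro smooth_funI) metis+

lemma pdiffs_const: "pdiffs ds (\<lambda>_. c) = (\<lambda>_. if ds = [] then c else 0)"
  by (rule pdiffs_eqI) auto

lemma smooth_fun_const: "smooth_fun (\<lambda>_. c)"
  by (rule smooth_funI_pdiffs_eq[where F="\<lambda>ds _. if ds = [] then c else 0"]) auto

lemma pdiffs_diff:
  assumes "smooth_fun u" "smooth_fun v"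
  shows "pdiffs ds (\<lambda>x. u x - v x) = (\<lambda>x. pdiffs ds u x - pdiffs ds v x)"
  by (rule pdiffs_eqI[where F="\<lambda>ds x. pdiffs ds u x - pdiffs ds v x"])
    (auto intro!: DERIV_diff smooth_fun_has_real_derivative_on_line assms)

lemma smooth_fun_diff:
  assumes "smooth_fun u" "smooth_fun v"
  shows "smooth_fun (\<lambda>x. u x - v x)"
  by (rule smooth_funI_pdiffs_eq[where F="\<lambda>ds x. pdiffs ds u x - pdiffs ds v x"])
    (auto intro!: DERIV_diff smooth_fun_has_real_derivative_on_line continuous_intros smooth_fun_continuous_on assms)

lemma has_real_derivative_on_line_scaleR:
  assumes "smooth_fun u"
  shows "(on_line (\<lambda>x. c ^ length ds * pdiffs ds u (c *\<^sub>R x)) x i has_real_derivative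
      c ^ length (i # ds) * pdiffs (i # ds) u (c *\<^sub>R x)) (at 0)"
proof -
  have "(on_line (pdiffs ds u) (c *\<^sub>R x) i has_real_derivative pdiffs (i # ds) u (c *\<^sub>R x)) (at (c * 0))"
    using smooth_fun_has_real_derivative_on_line[OF assms] by simp
  from DERIV_cmult[OF DERIV_chain2[OF this DERIV_cmult_Id], of "c ^ length ds"]
  show ?thesis
    by (simp add: scaleR_add_right algebra_simps)
qed

lemma pdiffs_scaleR:
  assumes "smooth_fun u"
  shows "pdiffs ds (\<lambda>x. u (c *\<^sub>R x)) = (\<lambda>x. c ^ length ds * pdiffs ds u (c *\<^sub>R x))"
  by (rule pdiffs_eqI[where F="\<lambda>ds x. c ^ length ds * pdiffs ds u (c *\<^sub>R x)"])
    (use has_real_derivative_on_line_scaleR[OF assms] in simp_all)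

lemma smooth_fun_scaleR:
  assumes "smooth_fun u"
  shows "smooth_fun (\<lambda>x. u (c *\<^sub>R x))"
  by (rule smooth_funI_pdiffs_eq[where F="\<lambda>ds x. c ^ length ds * pdiffs ds u (c *\<^sub>R x)"])
    (use has_real_derivative_on_line_scaleR[OF assms] in \<open>auto intro!: continuous_intros
      continuous_on_compose2[OF smooth_fun_continuous_on[OF assms]]\<close>)

lemma has_real_derivative_on_line_component:
  assumes "(F has_real_derivative F') (at (x $ j))"
  shows "((\<lambda>t. F ((x + t *\<^sub>R axis i 1) $ j)) has_real_derivative (if i = j then F' else 0)) (at 0)"
proof (cases "i = j")
  case True
  have "((\<lambda>t. x $ j + t) has_real_derivative 1) (at 0)"
    by (auto intro!: derivative_eq_intros)
  with assms have "((\<lambda>t. F (x $ j + t)) has_real_derivative F' * 1) (at 0)"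
    by (intro DERIV_chain2) auto
  then show ?thesis
    using True by (simp add: axis_def)
qed (simp add: axis_def)

lemma smooth_fun_component_affine:
  assumes "smooth_real u"
  shows "smooth_fun (\<lambda>x. u (a + b * x $ j))"
proof -
  define G where "G ds y = (if set ds \<subseteq> {j} then b ^ length ds * (deriv ^^ length ds) u (a + b * y) else 0)"
    for ds y
  have G_deriv: "(G ds has_real_derivative G (j # ds) y) (at y)" for ds y
  proof (cases "set ds \<subseteq> {j}")
    case True
    have "((deriv ^^ length ds) u has_real_derivative (deriv ^^ Suc (length ds)) u (a + b * y)) (at (a + b * y))"
      using assms by (simp add: smooth_real_def)
    moreover have "((\<lambda>y. a + b * y) has_real_derivative b) (at y)"
      by (auto intro!: derivative_eq_intros)
    ultimately have "((\<lambda>y. b ^ length ds * (deriv ^^ length ds) u (a + b * y)) has_real_derivative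
        b ^ length ds * ((deriv ^^ Suc (length ds)) u (a + b * y) * b)) (at y)"
      by (intro DERIV_cmult DERIV_chain2)
    then show ?thesis
      using True by (simp add: G_def[abs_def] algebra_simps)
  qed (simp add: G_def[abs_def])
  have G_Cons: "G (i # ds) y = (if i = j then G (j # ds) y else 0)" for i ds y
    by (simp add: G_def)
  have G_line: "(on_line (\<lambda>x. G ds (x $ j)) x i has_real_derivative G (i # ds) (x $ j)) (at 0)" for ds i x
    by (subst G_Cons) (rule has_real_derivative_on_line_component[OF G_deriv])
  have G_cont: "continuous_on UNIV (\<lambda>x. G ds (x $ j))" for ds
  proof -
    have "continuous_on UNIV (G ds)"
      by (rule continuous_at_imp_continuous_on) (use DERIV_isCont[OF G_deriv] in blast)
    then show ?thesis
      by (rule continuous_on_compose2) (auto intro: continuous_intros)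
  qed
  have G_Nil: "(\<lambda>x. G [] (x $ j)) = (\<lambda>x. u (a + b * x $ j))"
    by (simp add: G_def)
  show ?thesis
    by (rule smooth_funI_pdiffs_eq[where F="\<lambda>ds x. G ds (x $ j)", OF G_Nil G_cont G_line])
qed

section \<open>The Leibniz rule\<close>

definition leibniz_step :: "'n \<Rightarrow> ('n list \<times> 'n list) list \<Rightarrow> ('n list \<times> 'n list) list" where
  "leibniz_step i T = concat (map (\<lambda>(a, b). [(i # a, b), (a, i # b)]) T)"

(* pdiffs ds (u * f) is the sum of pdiffs a u * pdiffs b f over the pairs (a, b) in
   leibniz_terms ds, counted with multiplicity. *)
primrec leibniz_terms :: "'n list \<Rightarrow> ('n list \<times> 'n list) list" where
  "leibniz_terms [] = [([], [])]"
| "leibniz_terms (i # ds) = leibniz_step i (leibniz_terms ds)"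

definition leibniz_sum :: "(real^'n::finite \<Rightarrow> real) \<Rightarrow> (real^'n \<Rightarrow> real) \<Rightarrow>
    ('n list \<times> 'n list) list \<Rightarrow> real^'n \<Rightarrow> real" where
  "leibniz_sum u f T x = (\<Sum>(a, b)\<leftarrow>T. pdiffs a u x * pdiffs b f x)"

lemma leibniz_step_simps [simp]:
  "leibniz_step i [] = []"
  "leibniz_step i ((a, b) # T) = (i # a, b) # (a, i # b) # leibniz_step i T"
  by (simp_all add: leibniz_step_def)

lemma subseq_leibniz_terms: "(a, b) \<in> set (leibniz_terms ds) \<Longrightarrow> subseq b ds"
  by (induction ds arbitrary: a b) (auto simp: leibniz_step_def)

lemma leibniz_sum_simps [simp]:
  "leibniz_sum u f [] x = 0"
  "leibniz_sum u f ((a, b) # T) x = pdiffs a u x * pdiffs b f x + leibniz_sum u f T x"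
  by (simp_all add: leibniz_sum_def)

lemma has_real_derivative_on_line_leibniz_sum:
  assumes "smooth_fun u" "smooth_fun f"
  shows "(on_line (leibniz_sum u f T) x i has_real_derivative leibniz_sum u f (leibniz_step i T) x) (at 0)"
proof (induction T)
  case (Cons ab T)
  obtain a b where ab: "ab = (a, b)"
    by fastforce
  have "((\<lambda>t. on_line (pdiffs a u) x i t * on_line (pdiffs b f) x i t + on_line (leibniz_sum u f T) x i t)
      has_real_derivative pdiff i (pdiffs a u) x * on_line (pdiffs b f) x i 0 +
        pdiff i (pdiffs b f) x * on_line (pdiffs a u) x i 0 + leibniz_sum u f (leibniz_step i T) x) (at 0)"
    by (intro DERIV_add DERIV_mult smooth_fun_has_real_derivative_on_line assms Cons.IH)
  then show ?case
    by (simp add: ab algebra_simps)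
qed (simp add: leibniz_sum_def)

lemma continuous_on_leibniz_sum:
  assumes "smooth_fun u" "smooth_fun f"
  shows "continuous_on UNIV (leibniz_sum u f T)"
proof (induction T)
  case (Cons ab T)
  then show ?case
    by (cases ab) (simp add: continuous_on_add continuous_on_mult smooth_fun_continuous_on assms)
qed (simp add: leibniz_sum_def)

lemma
  assumes "smooth_fun u" "smooth_fun f"
  shows pdiffs_mult: "pdiffs ds (\<lambda>x. u x * f x) = leibniz_sum u f (leibniz_terms ds)"
    and smooth_fun_mult: "smooth_fun (\<lambda>x. u x * f x)"
proof -
  let ?F = "\<lambda>ds. leibniz_sum u f (leibniz_terms ds)"
  have F_Nil: "?F [] = (\<lambda>x. u x * f x)"
    by (rule ext) simp
  show "pdiffs ds (\<lambda>x. u x * f x) = ?F ds"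
    by (rule pdiffs_eqI[where F="?F", OF F_Nil]) (simp add: has_real_derivative_on_line_leibniz_sum[OF assms])
  show "smooth_fun (\<lambda>x. u x * f x)"
    by (rule smooth_funI_pdiffs_eq[where F="?F", OF F_Nil continuous_on_leibniz_sum[OF assms]])
      (simp add: has_real_derivative_on_line_leibniz_sum[OF assms])
qed

lemma abs_leibniz_sum_le:
  assumes "\<And>a b. (a, b) \<in> set T \<Longrightarrow> \<bar>pdiffs a u x\<bar> \<le> A a \<and> \<bar>pdiffs b f x\<bar> \<le> S"
  shows "\<bar>leibniz_sum u f T x\<bar> \<le> (\<Sum>(a, b)\<leftarrow>T. A a) * S"
  using assms
proof (induction T)
  case (Cons ab T)
  obtain a b where ab: "ab = (a, b)"
    by fastforce
  have "\<bar>pdiffs a u x * pdiffs b f x\<bar> \<le> A a * S"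
    unfolding abs_mult using Cons.prems[of a b] by (intro mult_mono) (auto simp: ab)
  moreover have "\<bar>leibniz_sum u f T x\<bar> \<le> (\<Sum>(a, b)\<leftarrow>T. A a) * S"
    by (rule Cons.IH) (use Cons.prems in auto)
  ultimately show ?case
    by (simp add: ab distrib_right)
qed (simp add: leibniz_sum_def)

lemma leibniz_sum_tendsto_0:
  assumes "\<And>a b. (a, b) \<in> set T \<Longrightarrow> (\<lambda>n. pdiffs a (u n) x) \<longlonglongrightarrow> 0"
  shows "(\<lambda>n. leibniz_sum (u n) f T x) \<longlonglongrightarrow> 0"
  using assms
proof (induction T)
  case (Cons ab T)
  obtain a b where ab: "ab = (a, b)"
    by fastforce
  have "(\<lambda>n. pdiffs a (u n) x * pdiffs b f x + leibniz_sum (u n) f T x) \<longlonglongrightarrow> 0 * pdiffs b f x + 0"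
    using Cons by (intro tendsto_intros) (auto simp: ab)
  then show ?case
    by (simp add: ab)
qed (simp add: leibniz_sum_def)

lemma smooth_fun_prod:
  assumes "finite S" "\<And>j. j \<in> S \<Longrightarrow> smooth_fun (g j)"
  shows "smooth_fun (\<lambda>x. \<Prod>j\<in>S. g j x)"
  using assms by (induction S rule: finite_induct) (auto intro: smooth_fun_const smooth_fun_mult)

lemma pdiffs_eq_0_on_open:
  assumes "smooth_fun g" "open U" "\<And>y. y \<in> U \<Longrightarrow> g y = 0" "x \<in> U"
  shows "pdiffs ds g x = 0"
  using assms(4)
proof (induction ds arbitrary: x)
  case (Cons i ds)
  let ?S = "(\<lambda>t. x + t *\<^sub>R axis i 1) -` U"
  have "open ?S"
    by (rule continuous_open_vimage[OF assms(2)]) (auto intro!: continuous_intros)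
  moreover have "0 \<in> ?S" "\<And>t. t \<in> ?S \<Longrightarrow> 0 = on_line (pdiffs ds g) x i t"
    using Cons by auto
  ultimately have "(on_line (pdiffs ds g) x i has_real_derivative 0) (at 0)"
    by (intro has_field_derivative_transform_within_open[OF DERIV_const])
  then show ?case
    by (simp add: pdiff_eqI)
qed (use assms(3) in simp)

definition mi_list :: "'n list \<Rightarrow> ('n \<Rightarrow> nat) \<Rightarrow> 'n list" where
  "mi_list cs \<mu> = concat (map (\<lambda>i. replicate (\<mu> i) i) cs)"

lemma mi_list_Cons: "mi_list (c # cs) \<mu> = replicate (\<mu> c) c @ mi_list cs \<mu>"
  by (simp add: mi_list_def)

lemma mderiv_eq_pdiffs: "mderiv \<mu> f = pdiffs (mi_list coord_enum \<mu>) f"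
proof -
  have "foldr (\<lambda>i g. (pdiff i ^^ \<mu> i) g) cs f = pdiffs (mi_list cs \<mu>) f" for cs
  proof (induction cs)
    case (Cons c cs)
    have "pdiffs (replicate k c) g = (pdiff c ^^ k) g" for k g
      by (induction k) auto
    then show ?case
      using Cons by (simp add: mi_list_def pdiffs_append)
  qed (simp add: mi_list_def)
  then show ?thesis
    by (simp add: mderiv_def)
qed

lemma distinct_coord_enum: "distinct (coord_enum :: 'n::finite list)"
proof -
  have "\<exists>xs :: 'n list. distinct xs \<and> set xs = UNIV"
    using finite_distinct_list[of "UNIV :: 'n set"] by auto
  then have "distinct (coord_enum :: 'n list) \<and> set (coord_enum :: 'n list) = UNIV"
    unfolding coord_enum_def by (rule someI_ex)
  then show ?thesis
    by simp
qed

lemma subseq_mi_list: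
  assumes "distinct cs" "subseq b (mi_list cs \<mu>)"
  shows "\<exists>\<nu>. (\<forall>i. \<nu> i \<le> \<mu> i) \<and> b = mi_list cs \<nu>"
  using assms
proof (induction cs arbitrary: b)
  case Nil
  then show ?case
    by (intro exI[of _ "\<lambda>_. 0"]) (simp add: mi_list_def)
next
  case (Cons c cs)
  have "subseq b (replicate (\<mu> c) c @ mi_list cs \<mu>)"
    using Cons.prems(2) by (simp add: mi_list_Cons)
  then obtain b1 b2 where b: "b = b1 @ b2" "subseq b1 (replicate (\<mu> c) c)" "subseq b2 (mi_list cs \<mu>)"
    unfolding subseq_append_iff by blast
  obtain \<nu> where \<nu>: "\<forall>i. \<nu> i \<le> \<mu> i" "b2 = mi_list cs \<nu>"
    using Cons.IH[OF _ b(3)] Cons.prems(1) by auto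
  have "\<forall>y\<in>set b1. y = c"
  proof
    fix y assume "y \<in> set b1"
    with b(2) show "y = c"
      by (rule list_emb_set) simp
  qed
  then have b1: "b1 = replicate (length b1) c" "length b1 \<le> \<mu> c"
    using list_emb_length[OF b(2)] by (simp_all add: replicate_length_same)
  have "c \<notin> set cs"
    using Cons.prems(1) by simp
  then have "mi_list cs (\<nu>(c := length b1)) = mi_list cs \<nu>"
    unfolding mi_list_def by (intro arg_cong[where f=concat] map_cong) auto
  then have "b = mi_list (c # cs) (\<nu>(c := length b1))"
    using b(1) b1(1) \<nu>(2) by (simp add: mi_list_Cons)
  moreover have "\<forall>i. (\<nu>(c := length b1)) i \<le> \<mu> i"
    using \<nu>(1) b1(2) by simp
  ultimately show ?case
    by blast
qed

lemma mi_order_mono: "(\<And>i. \<nu> i \<le> \<mu> i) \<Longrightarrow> mi_order \<nu> \<le> mi_order \<mu>"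
  unfolding mi_order_def by (intro sum_mono)

lemma finite_mi_order_le: "finite {\<mu>::'n::finite \<Rightarrow> nat. mi_order \<mu> \<le> m}"
proof (rule finite_subset)
  have "\<mu> i \<le> mi_order \<mu>" for \<mu> :: "'n \<Rightarrow> nat" and i
    unfolding mi_order_def by (rule member_le_sum) auto
  then show "{\<mu>::'n \<Rightarrow> nat. mi_order \<mu> \<le> m} \<subseteq> PiE UNIV (\<lambda>_. {..m})"
    by (auto simp: PiE_iff intro: order.trans)
qed (simp add: finite_PiE)

section \<open>Test functions\<close>

lemma test_functions_iff: "g \<in> test_functions \<longleftrightarrow> smooth_fun g \<and> bounded {x. g x \<noteq> 0}"
  by (simp add: test_functions_def)

lemma test_function_smooth: "g \<in> test_functions \<Longrightarrow> smooth_fun g"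
  by (simp add: test_functions_iff)

lemma pdiffs_eq_0_outside_support:
  assumes "smooth_fun g" "x \<notin> closure {x. g x \<noteq> 0}"
  shows "pdiffs ds g x = 0"
proof (rule pdiffs_eq_0_on_open[OF assms(1), where U="- closure {x. g x \<noteq> 0}"])
  show "g y = 0" if "y \<in> - closure {x. g x \<noteq> 0}" for y
  proof (rule ccontr)
    assume "g y \<noteq> 0"
    then have "y \<in> closure {x. g x \<noteq> 0}"
      by (intro closure_subset[THEN subsetD]) simp
    with that show False
      by simp
  qed
  show "open (- closure {x. g x \<noteq> 0})"
    by (simp add: open_Compl)
  show "x \<in> - closure {x. g x \<noteq> 0}"
    using assms(2) by simp
qed

lemma test_function_pdiffs_bounded:
  assumes "g \<in> test_functions"
  shows "\<exists>B. \<forall>x. \<bar>pdiffs ds g x\<bar> \<le> B"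
proof -
  let ?K = "closure {x. g x \<noteq> 0}"
  have g: "smooth_fun g" and "compact ?K"
    using assms by (auto simp: test_functions_def)
  then have "compact (pdiffs ds g ` ?K)"
    by (intro compact_continuous_image continuous_on_subset[OF smooth_fun_continuous_on]) auto
  then have "bounded (pdiffs ds g ` ?K)"
    by (rule compact_imp_bounded)
  then obtain B where "\<forall>y\<in>pdiffs ds g ` ?K. norm y \<le> B"
    unfolding bounded_iff by (elim exE)
  then have B: "\<bar>pdiffs ds g x\<bar> \<le> B" if "x \<in> ?K" for x
    using that by simp
  have "\<bar>pdiffs ds g x\<bar> \<le> max B 0" for x
  proof (cases "x \<in> ?K")
    case True
    then show ?thesis
      using B[OF True] by simp
  next
    case False
    then show ?thesis
      using pdiffs_eq_0_outside_support[OF g False] by simp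
  qed
  then show ?thesis
    by (intro exI allI)
qed

lemma test_function_mult:
  assumes "g \<in> test_functions" "smooth_fun f"
  shows "(\<lambda>x. g x * f x) \<in> test_functions"
proof -
  have "bounded {x. g x * f x \<noteq> 0}"
    by (rule bounded_subset[of "{x. g x \<noteq> 0}"]) (use assms(1) in \<open>simp_all add: test_functions_iff subset_eq\<close>)
  then show ?thesis
    using assms by (simp add: test_functions_iff smooth_fun_mult)
qed

lemma test_function_scaleR:
  assumes "g \<in> test_functions" "c \<noteq> 0"
  shows "(\<lambda>x. g (c *\<^sub>R x)) \<in> test_functions"
proof -
  have "{x. g (c *\<^sub>R x) \<noteq> 0} \<subseteq> (\<lambda>y. inverse c *\<^sub>R y) ` {y. g y \<noteq> 0}"
  proof
    fix x
    assume "x \<in> {x. g (c *\<^sub>R x) \<noteq> 0}"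
    then show "x \<in> (\<lambda>y. inverse c *\<^sub>R y) ` {y. g y \<noteq> 0}"
      using assms(2) by (intro image_eqI[where x="c *\<^sub>R x"]) simp_all
  qed
  moreover have "bounded ((\<lambda>y. inverse c *\<^sub>R y) ` {y. g y \<noteq> 0})"
    using assms(1) by (intro bounded_scaling) (simp add: test_functions_iff)
  ultimately have "bounded {x. g (c *\<^sub>R x) \<noteq> 0}"
    by (rule bounded_subset[rotated])
  then show ?thesis
    using assms(1) by (simp add: test_functions_iff smooth_fun_scaleR)
qed

lemma seminorm_pow_test_function_finite:
  fixes W :: "real^'n::finite \<Rightarrow> real"
  assumes g: "g \<in> test_functions"
    and W_bounded: "\<And>S. bounded S \<Longrightarrow> \<exists>B. \<forall>x\<in>S. W x \<le> B" and W_nonneg: "\<And>x. 0 \<le> W x"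
    and p: "0 \<le> p"
  shows "seminorm_pow p W m g < \<infinity>"
proof -
  define K where "K = closure {x. g x \<noteq> 0}"
  define I where "I = {\<mu>::'n \<Rightarrow> nat. mi_order \<mu> \<le> m}"
  have "smooth_fun g" "compact K"
    using g by (auto simp: test_functions_def K_def)
  obtain BW where BW: "\<forall>x\<in>K. W x \<le> BW"
    using W_bounded[OF compact_imp_bounded[OF \<open>compact K\<close>]] by auto
  have "\<forall>\<mu>. \<exists>B. \<forall>x. \<bar>mderiv \<mu> g x\<bar> \<le> B"
    unfolding mderiv_eq_pdiffs using test_function_pdiffs_bounded[OF g] by (intro allI)
  then obtain BD where BD: "\<And>\<mu> x. \<bar>mderiv \<mu> g x\<bar> \<le> BD \<mu>"
    by metis
  define C where "C = BW powr p * (\<Sum>\<mu>\<in>I. BD \<mu> powr p)"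
  have "ennreal (W x powr p * (\<Sum>\<mu>\<in>I. \<bar>mderiv \<mu> g x\<bar> powr p)) \<le> ennreal C * indicator K x" for x
  proof (cases "x \<in> K")
    case True
    have "W x powr p * (\<Sum>\<mu>\<in>I. \<bar>mderiv \<mu> g x\<bar> powr p) \<le> C"
      unfolding C_def using True BW BD W_nonneg p
      by (intro mult_mono sum_mono powr_mono2 sum_nonneg) auto
    then show ?thesis
      using True by (simp add: ennreal_leI)
  next
    case False
    then show ?thesis
      using pdiffs_eq_0_outside_support[OF \<open>smooth_fun g\<close>] by (simp add: K_def mderiv_eq_pdiffs)
  qed
  then have "seminorm_pow p W m g \<le> (\<integral>\<^sup>+ x. ennreal C * indicator K x \<partial>lborel)"
    unfolding seminorm_pow_def I_def[symmetric] by (intro nn_integral_mono)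
  also have "\<dots> = ennreal C * emeasure lborel K"
    using \<open>compact K\<close> by (intro nn_integral_cmult_indicator) (simp add: borel_compact)
  also have "\<dots> < \<infinity>"
    using emeasure_compact_finite[OF \<open>compact K\<close>] by (simp add: ennreal_mult_less_top)
  finally show ?thesis .
qed

section \<open>Cut-off functions\<close>

definition bump :: "real \<Rightarrow> real" where
  "bump t = exp 2 * flat_exp (1 + t) * flat_exp (1 - t)"

definition bump_cube :: "real^'n::finite \<Rightarrow> real" where
  "bump_cube x = (\<Prod>j\<in>UNIV. bump (x $ j))"

lemma bump_cube_0: "bump_cube 0 = 1"
  by (simp add: bump_cube_def bump_def flat_exp_eq flip: exp_add)

lemma bump_eq_0: "1 \<le> \<bar>t\<bar> \<Longrightarrow> bump t = 0"
  by (auto simp: bump_def flat_exp_eq)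

lemma bump_cube_in_test_functions: "(bump_cube :: real^'n::finite \<Rightarrow> real) \<in> test_functions"
proof -
  have "smooth_fun (\<lambda>x. bump (x $ j))" for j :: 'n
  proof -
    have "smooth_fun (\<lambda>x. flat_exp (1 + s * x $ j))" for s
      by (rule smooth_fun_component_affine[OF smooth_real_flat_exp])
    from smooth_fun_mult[OF smooth_fun_mult[OF smooth_fun_const this] this, of "exp 2" 1 "-1"]
    show ?thesis
      by (simp add: bump_def)
  qed
  then have "smooth_fun (bump_cube :: real^'n \<Rightarrow> real)"
    unfolding bump_cube_def[abs_def] by (intro smooth_fun_prod) auto
  moreover have "{x. bump_cube x \<noteq> 0} \<subseteq> cball (0 :: real^'n) (real CARD('n))"
  proof
    fix x :: "real^'n"
    assume "x \<in> {x. bump_cube x \<noteq> 0}"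
    then have "\<bar>x $ j\<bar> \<le> 1" for j
      using bump_eq_0[of "x $ j"] by (force simp: bump_cube_def)
    then have "norm x \<le> real CARD('n)"
      using norm_le_l1_cart[of x] sum_mono[of UNIV "\<lambda>j. \<bar>x $ j\<bar>" "\<lambda>_. 1"] by simp
    then show "x \<in> cball 0 (real CARD('n))"
      by simp
  qed
  ultimately show ?thesis
    by (auto simp: test_functions_iff intro: bounded_subset[OF bounded_cball])
qed

definition cutoff :: "nat \<Rightarrow> real^'n::finite \<Rightarrow> real" where
  "cutoff n x = bump_cube (x /\<^sub>R real (Suc n))"

lemma cutoff_in_test_functions: "cutoff n \<in> test_functions"
  unfolding cutoff_def[abs_def] by (rule test_function_scaleR[OF bump_cube_in_test_functions]) simp

lemma pdiffs_one_minus_cutoff: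
  fixes x :: "real^'n::finite"
  shows "pdiffs ds (\<lambda>x. 1 - cutoff n x) x =
    (if ds = [] then 1 else 0) - inverse (real (Suc n)) ^ length ds * pdiffs ds bump_cube (x /\<^sub>R real (Suc n))"
proof -
  have "pdiffs ds (\<lambda>x. 1 - cutoff n x) = (\<lambda>x. pdiffs ds (\<lambda>_. 1) x - pdiffs ds (cutoff n) x)"
    by (rule pdiffs_diff[OF smooth_fun_const test_function_smooth[OF cutoff_in_test_functions]])
  moreover have "pdiffs ds (cutoff n :: real^'n \<Rightarrow> real) =
      (\<lambda>x. inverse (real (Suc n)) ^ length ds * pdiffs ds bump_cube (x /\<^sub>R real (Suc n)))"
    unfolding cutoff_def[abs_def]
    by (rule pdiffs_scaleR[OF test_function_smooth[OF bump_cube_in_test_functions]])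
  ultimately show ?thesis
    by (simp add: pdiffs_const)
qed

lemma pdiffs_one_minus_cutoff_bounded:
  "\<exists>B. \<forall>n (x :: real^'n::finite). \<bar>pdiffs ds (\<lambda>x. 1 - cutoff n x) x\<bar> \<le> B"
proof -
  obtain B where B: "\<And>y :: real^'n. \<bar>pdiffs ds bump_cube y\<bar> \<le> B"
    using test_function_pdiffs_bounded[OF bump_cube_in_test_functions] by metis
  have "\<bar>pdiffs ds (\<lambda>x. 1 - cutoff n x) x\<bar> \<le> 1 + B" for n and x :: "real^'n"
  proof -
    let ?c = "inverse (real (Suc n)) ^ length ds" and ?d = "pdiffs ds bump_cube (x /\<^sub>R real (Suc n))"
    have "0 \<le> ?c" "?c \<le> 1"
      by (simp, intro power_le_one) (simp_all add: inverse_le_1_iff)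
    then have "\<bar>?c * ?d\<bar> \<le> 1 * B"
      unfolding abs_mult using B order.trans[OF abs_ge_zero B] by (intro mult_mono) simp_all
    moreover have "\<bar>if ds = [] then 1 else 0 :: real\<bar> \<le> 1"
      by simp
    ultimately show ?thesis
      unfolding pdiffs_one_minus_cutoff using abs_triangle_ineq4[of "if ds = [] then 1 else 0" "?c * ?d"]
      by linarith
  qed
  then show ?thesis
    by (intro exI allI)
qed

lemma pdiffs_one_minus_cutoff_tendsto_0:
  fixes x :: "real^'n::finite"
  shows "(\<lambda>n. pdiffs ds (\<lambda>x. 1 - cutoff n x) x) \<longlonglongrightarrow> 0"
proof -
  have c: "(\<lambda>n. inverse (real (Suc n))) \<longlonglongrightarrow> 0"
    by (rule LIMSEQ_inverse_real_of_nat)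
  have "(\<lambda>n. x /\<^sub>R real (Suc n)) \<longlonglongrightarrow> 0"
    using tendsto_scaleR[OF c tendsto_const, of x] by simp
  then have "(\<lambda>n. pdiffs ds bump_cube (x /\<^sub>R real (Suc n))) \<longlonglongrightarrow> pdiffs ds bump_cube 0"
    by (intro continuous_on_tendsto_compose[OF smooth_fun_continuous_on]
        test_function_smooth[OF bump_cube_in_test_functions]) auto
  then have "(\<lambda>n. (if ds = [] then 1 else 0) - inverse (real (Suc n)) ^ length ds *
      pdiffs ds bump_cube (x /\<^sub>R real (Suc n))) \<longlonglongrightarrow>
      (if ds = [] then 1 else 0) - 0 ^ length ds * pdiffs ds bump_cube 0"
    by (intro tendsto_intros c)
  then show ?thesis
    unfolding pdiffs_one_minus_cutoff by (cases ds) (simp_all add: bump_cube_0)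
qed

section \<open>Convergence in the seminorms\<close>

lemma powr_sum_le_card_powr_sum_powr:
  fixes a :: "'i \<Rightarrow> real"
  assumes "finite I" "\<And>i. 0 \<le> a i" "0 \<le> p"
  shows "(\<Sum>i\<in>I. a i) powr p \<le> real (card I) powr p * (\<Sum>i\<in>I. a i powr p)"
proof (cases "I = {}")
  case False
  have "Max (a ` I) \<in> a ` I"
    using assms(1) False by (intro Max_in) auto
  then obtain i0 where "i0 \<in> I" "a i0 = Max (a ` I)"
    by auto
  moreover have "a i \<le> Max (a ` I)" if "i \<in> I" for i
    using assms(1) that by (intro Max_ge) auto
  ultimately have i0: "i0 \<in> I" "\<And>i. i \<in> I \<Longrightarrow> a i \<le> a i0"
    by simp_all
  have "(\<Sum>i\<in>I. a i) powr p \<le> (real (card I) * a i0) powr p"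
    using i0 assms by (intro powr_mono2 sum_nonneg) (auto intro: sum_bounded_above)
  also have "\<dots> = real (card I) powr p * a i0 powr p"
    using assms by (simp add: powr_mult)
  also have "\<dots> \<le> real (card I) powr p * (\<Sum>i\<in>I. a i powr p)"
    using i0 assms by (intro mult_left_mono member_le_sum) auto
  finally show ?thesis .
qed simp

lemma sum_powr_le_of_le_sum:
  fixes a b :: "'i \<Rightarrow> real"
  assumes "finite I" "0 \<le> K" "0 \<le> p" "\<And>i. i \<in> I \<Longrightarrow> \<bar>a i\<bar> \<le> K * (\<Sum>j\<in>I. \<bar>b j\<bar>)"
  shows "(\<Sum>i\<in>I. \<bar>a i\<bar> powr p) \<le> real (card I) * K powr p * real (card I) powr p * (\<Sum>j\<in>I. \<bar>b j\<bar> powr p)"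
proof -
  have "(\<Sum>i\<in>I. \<bar>a i\<bar> powr p) \<le> (\<Sum>i\<in>I. (K * (\<Sum>j\<in>I. \<bar>b j\<bar>)) powr p)"
    using assms by (intro sum_mono powr_mono2) auto
  also have "\<dots> = real (card I) * K powr p * (\<Sum>j\<in>I. \<bar>b j\<bar>) powr p"
    using assms(2) by (simp add: powr_mult sum_nonneg)
  also have "\<dots> \<le> real (card I) * K powr p * (real (card I) powr p * (\<Sum>j\<in>I. \<bar>b j\<bar> powr p))"
    using powr_sum_le_card_powr_sum_powr[OF assms(1), of "\<lambda>j. \<bar>b j\<bar>" p] assms(3)
    by (intro mult_left_mono) auto
  finally show ?thesis
    by (simp add: mult.assoc)
qed

lemma leibniz_terms_mi_list:
  assumes "(a, b) \<in> set (leibniz_terms (mi_list coord_enum \<mu>))"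
  shows "\<exists>\<nu>. mi_order \<nu> \<le> mi_order \<mu> \<and> b = mi_list coord_enum \<nu>"
proof -
  have "subseq b (mi_list coord_enum \<mu>)"
    using assms by (rule subseq_leibniz_terms)
  then obtain \<nu> where "\<forall>i. \<nu> i \<le> \<mu> i" "b = mi_list coord_enum \<nu>"
    using subseq_mi_list[OF distinct_coord_enum] by auto
  then show ?thesis
    using mi_order_mono by auto
qed

lemma mderiv_mult_bounded:
  fixes u :: "nat \<Rightarrow> real^'n::finite \<Rightarrow> real"
  assumes u: "\<And>n. smooth_fun (u n)" and f: "smooth_fun f"
    and u_bounded: "\<And>ds. \<exists>B. \<forall>n x. \<bar>pdiffs ds (u n) x\<bar> \<le> B"
  shows "\<exists>K\<ge>0. \<forall>n x \<mu>. mi_order \<mu> \<le> m \<longrightarrow>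
    \<bar>mderiv \<mu> (\<lambda>x. u n x * f x) x\<bar> \<le> K * (\<Sum>\<nu>\<in>{\<nu>. mi_order \<nu> \<le> m}. \<bar>mderiv \<nu> f x\<bar>)"
proof -
  define I where "I = {\<nu>::'n \<Rightarrow> nat. mi_order \<nu> \<le> m}"
  define T where "T \<mu> = leibniz_terms (mi_list coord_enum \<mu>)" for \<mu> :: "'n \<Rightarrow> nat"
  define S where "S x = (\<Sum>\<nu>\<in>I. \<bar>mderiv \<nu> f x\<bar>)" for x
  obtain B where B: "\<And>ds n x. \<bar>pdiffs ds (u n) x\<bar> \<le> B ds"
    using u_bounded by metis
  define K where "K = (\<Sum>\<mu>\<in>I. \<Sum>(a, b)\<leftarrow>T \<mu>. B a)"
  have B_nonneg: "0 \<le> B ds" for ds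
    by (rule order.trans[OF abs_ge_zero B[of ds 0 0]])
  have f_le_S: "\<bar>pdiffs b f x\<bar> \<le> S x" if \<mu>: "\<mu> \<in> I" and ab: "(a, b) \<in> set (T \<mu>)" for \<mu> a b x
  proof -
    obtain \<nu> where \<nu>: "mi_order \<nu> \<le> mi_order \<mu>" "b = mi_list coord_enum \<nu>"
      using leibniz_terms_mi_list ab unfolding T_def by blast
    then show ?thesis
      unfolding S_def \<nu>(2) mderiv_eq_pdiffs[symmetric] using \<mu> finite_mi_order_le
      by (intro member_le_sum) (auto simp: I_def)
  qed
  have bound: "\<bar>mderiv \<mu> (\<lambda>x. u n x * f x) x\<bar> \<le> K * S x" if "\<mu> \<in> I" for n x \<mu>
  proof -
    have "\<bar>mderiv \<mu> (\<lambda>x. u n x * f x) x\<bar> \<le> (\<Sum>(a, b)\<leftarrow>T \<mu>. B a) * S x"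
      unfolding mderiv_eq_pdiffs pdiffs_mult[OF u f] T_def[symmetric]
      by (rule abs_leibniz_sum_le) (use B f_le_S[OF that] in auto)
    also have "\<dots> \<le> K * S x"
      unfolding K_def S_def using that finite_mi_order_le B_nonneg
      by (intro mult_right_mono member_le_sum sum_list_nonneg sum_nonneg) (auto simp: I_def)
    finally show ?thesis .
  qed
  moreover have "0 \<le> K"
    unfolding K_def using B_nonneg by (intro sum_nonneg sum_list_nonneg) auto
  ultimately show ?thesis
    unfolding I_def S_def by (intro exI[of _ K]) simp
qed

lemma mderiv_mult_tendsto_0:
  assumes "\<And>n. smooth_fun (u n)" "smooth_fun f" "\<And>ds. (\<lambda>n. pdiffs ds (u n) x) \<longlonglongrightarrow> 0"
  shows "(\<lambda>n. mderiv \<mu> (\<lambda>x. u n x * f x) x) \<longlonglongrightarrow> 0"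
  unfolding mderiv_eq_pdiffs pdiffs_mult[OF assms(1,2)]
  by (rule leibniz_sum_tendsto_0) (rule assms(3))

lemma borel_measurable_mderiv: "smooth_fun f \<Longrightarrow> mderiv \<mu> f \<in> borel_measurable lborel"
  unfolding mderiv_eq_pdiffs by (rule borel_measurable_pdiffs)

lemma nn_integral_cmult_seminorm_integrand:
  assumes f: "smooth_fun f" and W: "W \<in> borel_measurable lborel" and "0 \<le> C"
  shows "(\<integral>\<^sup>+x. ennreal (C * (W x powr p * (\<Sum>\<nu>\<in>{\<nu>. mi_order \<nu> \<le> m}. \<bar>mderiv \<nu> f x\<bar> powr p))) \<partial>lborel) =
    ennreal C * seminorm_pow p W m f"
proof -
  note W[measurable] borel_measurable_mderiv[OF f, measurable]
  have "0 \<le> W x powr p * (\<Sum>\<nu>\<in>{\<nu>. mi_order \<nu> \<le> m}. \<bar>mderiv \<nu> f x\<bar> powr p)" for x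
    by (intro mult_nonneg_nonneg sum_nonneg) auto
  with \<open>0 \<le> C\<close> show ?thesis
    unfolding seminorm_pow_def by (simp add: ennreal_mult nn_integral_cmult)
qed

lemma seminorm_pow_tendsto_0_dominated:
  fixes f :: "real^'n::finite \<Rightarrow> real" and g :: "nat \<Rightarrow> real^'n \<Rightarrow> real"
  assumes f: "smooth_fun f" and g: "\<And>n. smooth_fun (g n)"
    and W: "W \<in> borel_measurable lborel" and p: "0 < p" and f_finite: "seminorm_pow p W m f < \<infinity>"
    and K: "0 \<le> K"
    and g_le: "\<And>n x \<mu>. mi_order \<mu> \<le> m \<Longrightarrow>
      \<bar>mderiv \<mu> (g n) x\<bar> \<le> K * (\<Sum>\<nu>\<in>{\<nu>. mi_order \<nu> \<le> m}. \<bar>mderiv \<nu> f x\<bar>)"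
    and g_tendsto: "\<And>x \<mu>. (\<lambda>n. mderiv \<mu> (g n) x) \<longlonglongrightarrow> 0"
  shows "(\<lambda>n. seminorm_pow p W m (g n)) \<longlonglongrightarrow> 0"
proof -
  define I where "I = {\<nu>::'n \<Rightarrow> nat. mi_order \<nu> \<le> m}"
  define G where "G n x = W x powr p * (\<Sum>\<mu>\<in>I. \<bar>mderiv \<mu> (g n) x\<bar> powr p)" for n x
  define F where "F x = W x powr p * (\<Sum>\<nu>\<in>I. \<bar>mderiv \<nu> f x\<bar> powr p)" for x
  define C where "C = real (card I) * K powr p * real (card I) powr p"
  have "finite I"
    unfolding I_def by (rule finite_mi_order_le)
  have G_le: "G n x \<le> C * F x" for n x
  proof -
    have "(\<Sum>\<mu>\<in>I. \<bar>mderiv \<mu> (g n) x\<bar> powr p) \<le> C * (\<Sum>\<nu>\<in>I. \<bar>mderiv \<nu> f x\<bar> powr p)"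
      unfolding C_def using \<open>finite I\<close> K p g_le
      by (intro sum_powr_le_of_le_sum) (auto simp: I_def)
    then have "W x powr p * (\<Sum>\<mu>\<in>I. \<bar>mderiv \<mu> (g n) x\<bar> powr p) \<le>
        W x powr p * (C * (\<Sum>\<nu>\<in>I. \<bar>mderiv \<nu> f x\<bar> powr p))"
      by (rule mult_left_mono) simp
    then show ?thesis
      unfolding G_def F_def by (simp add: mult.left_commute)
  qed
  have G_nonneg: "0 \<le> G n x" for n x
    unfolding G_def by (intro mult_nonneg_nonneg sum_nonneg) auto
  have "0 \<le> C"
    unfolding C_def by simp
  note W[measurable] borel_measurable_mderiv[OF f, measurable] borel_measurable_mderiv[OF g, measurable]
  have "(\<lambda>n. \<integral>\<^sup>+x. norm (0 - G n x) \<partial>lborel) \<longlonglongrightarrow> 0"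
  proof (rule nn_integral_dominated_convergence_norm[where w="\<lambda>x. C * F x"])
    show "G n \<in> borel_measurable lborel" for n
      unfolding G_def[abs_def] by measurable
    show "(\<lambda>x. C * F x) \<in> borel_measurable lborel"
      unfolding F_def[abs_def] by measurable
    show "AE x in lborel. norm (G n x) \<le> C * F x" for n
      using G_le G_nonneg by simp
    show "(\<integral>\<^sup>+x. ennreal (C * F x) \<partial>lborel) < \<infinity>"
      using nn_integral_cmult_seminorm_integrand[OF f W \<open>0 \<le> C\<close>] f_finite
      by (simp add: F_def I_def ennreal_mult_less_top)
    show "(\<lambda>x. 0) \<in> borel_measurable lborel"
      by simp
    show "AE x in lborel. (\<lambda>n. G n x) \<longlonglongrightarrow> 0"
    proof (rule AE_I2)
      fix x
      have "(\<lambda>n. \<bar>mderiv \<mu> (g n) x\<bar> powr p) \<longlonglongrightarrow> 0" for \<mu>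
        using tendsto_rabs_zero[OF g_tendsto] p by (intro tendsto_zero_powrI[of _ _ "\<lambda>_. p" p]) auto
      then show "(\<lambda>n. G n x) \<longlonglongrightarrow> 0"
        unfolding G_def by (intro tendsto_mult_right_zero tendsto_null_sum)
    qed
  qed
  moreover have "(\<integral>\<^sup>+x. norm (0 - G n x) \<partial>lborel) = seminorm_pow p W m (g n)" for n
    unfolding seminorm_pow_def I_def[symmetric] G_def[symmetric] by (intro nn_integral_cong) (simp add: G_nonneg)
  ultimately show ?thesis
    by simp
qed

lemma Kseminorm_tendsto_0:
  assumes "(\<lambda>n. seminorm_pow p W m (g n)) \<longlonglongrightarrow> 0" "0 < p"
  shows "(\<lambda>n. Kseminorm p W m (g n)) \<longlonglongrightarrow> 0"
proof -
  have "(\<lambda>n. enn2real (seminorm_pow p W m (g n))) \<longlonglongrightarrow> enn2real 0"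
    using assms(1) by (intro tendsto_enn2real) simp_all
  then show ?thesis
    unfolding Kseminorm_def using assms(2)
    by (intro tendsto_zero_powrI[of _ _ "\<lambda>_. 1 / p" "1 / p"]) simp_all
qed

lemma Kseminorm_sub_cutoff_mult_tendsto_0:
  fixes f :: "real^'n::finite \<Rightarrow> real"
  assumes f: "smooth_fun f" and W: "W \<in> borel_measurable lborel" and p: "0 < p"
    and f_finite: "seminorm_pow p W m f < \<infinity>"
  shows "(\<lambda>n. Kseminorm p W m (\<lambda>x. f x - cutoff n x * f x)) \<longlonglongrightarrow> 0"
proof -
  have u: "smooth_fun (\<lambda>x :: real^'n. 1 - cutoff n x)" for n
    by (intro smooth_fun_diff smooth_fun_const test_function_smooth[OF cutoff_in_test_functions])
  obtain K where "0 \<le> K" and K: "\<forall>n x \<mu>. mi_order \<mu> \<le> m \<longrightarrow>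
      \<bar>mderiv \<mu> (\<lambda>x. (1 - cutoff n x) * f x) x\<bar> \<le> K * (\<Sum>\<nu>\<in>{\<nu>. mi_order \<nu> \<le> m}. \<bar>mderiv \<nu> f x\<bar>)"
    using mderiv_mult_bounded[OF u f pdiffs_one_minus_cutoff_bounded, of m] by auto
  have "(\<lambda>n. seminorm_pow p W m (\<lambda>x. (1 - cutoff n x) * f x)) \<longlonglongrightarrow> 0"
    by (rule seminorm_pow_tendsto_0_dominated[OF f smooth_fun_mult[OF u f] W p f_finite \<open>0 \<le> K\<close> K[rule_format]
          mderiv_mult_tendsto_0[OF u f pdiffs_one_minus_cutoff_tendsto_0]])
  then show ?thesis
    by (intro Kseminorm_tendsto_0 p) (simp add: left_diff_distrib)
qed

lemma test_functions_subset_Kp: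
  fixes M :: "'g \<Rightarrow> real^'n::finite \<Rightarrow> real"
  assumes "defining_family M" "0 \<le> p"
  shows "test_functions \<subseteq> Kp p M"
proof
  fix g :: "real^'n \<Rightarrow> real"
  assume g: "g \<in> test_functions"
  have "seminorm_pow p (M \<gamma>) m g < \<infinity>" for \<gamma> m
  proof (rule seminorm_pow_test_function_finite[OF g _ _ assms(2)])
    show "\<exists>B. \<forall>x\<in>S. M \<gamma> x \<le> B" if "bounded S" for S
      using assms(1) that by (simp add: defining_family_def)
    show "0 \<le> M \<gamma> x" for x
      using assms(1) by (simp add: defining_family_def)
  qed
  then show "g \<in> Kp p M"
    using g by (simp add: Kp_def test_function_smooth)
qed

theorem lemma3p2:
  fixes M :: "'g \<Rightarrow> real^'n::finite \<Rightarrow> real" and p :: real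
  assumes "defining_family M" and "p \<ge> 1"
  shows "test_functions \<subseteq> Kp p M \<and>
    (\<forall>f\<in>Kp p M. \<forall>F. finite F \<longrightarrow> (\<forall>\<epsilon>>0. \<exists>g\<in>test_functions.
        \<forall>(\<gamma>, m)\<in>F. Kseminorm p (M \<gamma>) m (\<lambda>x. f x - g x) < \<epsilon>))"
proof (intro conjI ballI allI impI)
  have M_measurable: "M \<gamma> \<in> borel_measurable lborel" for \<gamma>
    using assms(1) by (simp add: defining_family_def)
  show "test_functions \<subseteq> Kp p M"
    using assms by (intro test_functions_subset_Kp) simp_all
  fix f :: "real^'n \<Rightarrow> real" and F :: "('g \<times> nat) set" and \<epsilon> :: real
  assume "f \<in> Kp p M" "finite F" "0 < \<epsilon>"
  then have "\<forall>\<^sub>F n in sequentially. \<forall>(\<gamma>, m)\<in>F. Kseminorm p (M \<gamma>) m (\<lambda>x. f x - cutoff n x * f x) < \<epsilon>"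
    using assms(2) M_measurable
    by (auto simp: Kp_def intro!: eventually_ball_finite order_tendstoD(2)[OF Kseminorm_sub_cutoff_mult_tendsto_0])
  then obtain n where "\<forall>(\<gamma>, m)\<in>F. Kseminorm p (M \<gamma>) m (\<lambda>x. f x - cutoff n x * f x) < \<epsilon>"
    using eventually_sequentially by auto
  moreover have "(\<lambda>x. cutoff n x * f x) \<in> test_functions"
    using \<open>f \<in> Kp p M\<close> by (auto simp: Kp_def intro: test_function_mult[OF cutoff_in_test_functions])
  ultimately show "\<exists>g\<in>test_functions. \<forall>(\<gamma>, m)\<in>F. Kseminorm p (M \<gamma>) m (\<lambda>x. f x - g x) < \<epsilon>"
    by (rule bexI)
qed

end
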